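(* Let $S=\{p_0,p_1,\dots,p_m\}$ be a set of $m+1$ polynomials and let $n\in\mathbb{N}$ be the smallest integer with $S\subset\mathcal{P}_n$. Then: (1) if $m\le n$ and $\operatorname{span}(S)=\mathcal{P}_m$, then $W(p_0,\dots,p_m)(x)=C(p_0,\dots,p_m)(x)$ for all $x$; (2) if $m\le n$ and $S$ is linearly dependent, then $W(p_0,\dots,p_m)\equiv 0\equiv C(p_0,\dots,p_m)$; (3) if $m<n$ and $\operatorname{span}(S)\ne\mathcal{P}_k$ for every $k=1,2,\dots,m$, then $W(p_0,\dots,p_m)\neq C(p_0,\dots,p_m)$ (as functions of $x$); (4) if $m>n$, then $S$ is linearly dependent and $W(p_0,\dots,p_m)\equiv 0\equiv C(p_0,\dots,p_m)$.
   Context: $\mathcal{P}_n$ denotes the vector space of real polynomials of degree at most $n$ together with the zero polynomial. For $N$ functions, the Wronskian $W(f_1,\dots,f_N)(x)$ is the determinant of the $N\times N$ matrix with $(i,j)$ entry $f_j^{(i-1)}(x)$, and the Casoratian $C(f_1,\dots,f_N)(x)$ is the determinant of the $N\times N$ matrix with $(i,j)$ entry $f_j(x+i-1)$.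
   Formalization: Item (3) also assumes that m is at least 1 and that S is linearly independent. The statement above fails without it. *)

theory Defs
  imports "HOL-Computational_Algebra.Polynomial" "Jordan_Normal_Form.Determinant"
begin

definition polys_upto :: "nat \<Rightarrow> real poly set" where
  "polys_upto k = {q. degree q \<le> k}"

definition poly_span :: "(nat \<Rightarrow> real poly) \<Rightarrow> nat \<Rightarrow> real poly set" where
  "poly_span p m = {(\<Sum>i\<le>m. smult (c i) (p i)) | c. True}"

definition poly_lin_dep :: "(nat \<Rightarrow> real poly) \<Rightarrow> nat \<Rightarrow> bool" where
  "poly_lin_dep p m \<longleftrightarrow>
     (\<exists>c. (\<exists>i\<le>m. c i \<noteq> 0) \<and> (\<Sum>i\<le>m. smult (c i) (p i)) = 0)"

definition wronskian :: "(nat \<Rightarrow> real poly) \<Rightarrow> nat \<Rightarrow> real \<Rightarrow> real" where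
  "wronskian p m x = det (mat (Suc m) (Suc m) (\<lambda>(i, j). poly ((pderiv ^^ i) (p j)) x))"

definition casoratian :: "(nat \<Rightarrow> real poly) \<Rightarrow> nat \<Rightarrow> real \<Rightarrow> real" where
  "casoratian p m x = det (mat (Suc m) (Suc m) (\<lambda>(i, j). poly (p j) (x + real i)))"

end

theory Submission
  imports Defs
begin

text \<open>
  Both determinants are alternating and multilinear in the columns, so they vanish on dependent
  families and pick up the same factor under a change of basis; Gaussian elimination therefore
  reduces the non-vanishing claim to a basis q_0, ..., q_m of the span with pairwise distinct
  degrees d_j. Taylor's formula factors the Casoratian as C = det (V F), where V_ik = i^k / k!
  and F_kj = q_j^(k)(x) for k \<le> n, while the Wronskian is the determinant of the top square
  block of F. The square block of V has determinant 1, so C = W when all degrees are at most m.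
  In general Cauchy--Binet writes C - W as a sum over column maps taking some value beyond m.
  Counting degrees, only the column set {0, ..., m-1, m+1} contributes to the coefficient of
  x^(d_0 + ... + d_m - m(m+1)/2 - 1), one below the common leading term of C and W. That
  coefficient is a product of two determinants of polynomial bases with a gap in the degrees,
  evaluated at distinct points, and both are nonzero: the first because m \<ge> 1, the second
  because some d_j = n > m.
\<close>

section \<open>Multilinearity in the columns\<close>

lemma functional_matrix_change_basis:
  fixes L :: "nat \<Rightarrow> 'a :: comm_ring_1 poly \<Rightarrow> 'a"
  assumes lin: "\<And>i c. i \<le> m \<Longrightarrow> L i (\<Sum>k\<le>m. smult (c k) (p k)) = (\<Sum>k\<le>m. c k * L i (p k))"
    and q: "\<forall>j\<le>m. q j = (\<Sum>k\<le>m. smult (C j k) (p k))"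
  shows "mat (Suc m) (Suc m) (\<lambda>(i, j). L i (q j)) =
    mat (Suc m) (Suc m) (\<lambda>(i, j). L i (p j)) * mat (Suc m) (Suc m) (\<lambda>(k, j). C j k)"
    (is "?Q = ?P * ?C")
proof (rule eq_matI)
  fix i j assume "i < dim_row (?P * ?C)" "j < dim_col (?P * ?C)"
  then have ij: "i \<le> m" "j \<le> m"
    by auto
  then have "L i (q j) = (\<Sum>k\<in>{0..<Suc m}. L i (p k) * C j k)"
    using q lin by (simp add: atLeast0LessThan lessThan_Suc_atMost mult.commute)
  then show "?Q $$ (i, j) = (?P * ?C) $$ (i, j)"
    using ij by (simp add: scalar_prod_def)
qed auto

lemma det_functional_matrix_lin_dep:
  fixes L :: "nat \<Rightarrow> real poly \<Rightarrow> real"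
  assumes lin: "\<And>i c. i \<le> m \<Longrightarrow> L i (\<Sum>k\<le>m. smult (c k) (p k)) = (\<Sum>k\<le>m. c k * L i (p k))"
    and dep: "poly_lin_dep p m"
  shows "det (mat (Suc m) (Suc m) (\<lambda>(i, j). L i (p j))) = 0"
proof -
  let ?M = "mat (Suc m) (Suc m) (\<lambda>(i, j). L i (p j))"
  obtain c where c: "\<exists>i\<le>m. c i \<noteq> 0" "(\<Sum>i\<le>m. smult (c i) (p i)) = 0"
    using dep unfolding poly_lin_dep_def by blast
  have L0: "L i 0 = 0" if "i \<le> m" for i
    using lin[OF that, of "\<lambda>_. 0"] by simp
  have "?M *\<^sub>v vec (Suc m) c = 0\<^sub>v (Suc m)"
  proof (rule eq_vecI)
    fix i assume "i < dim_vec (0\<^sub>v (Suc m) :: real vec)"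
    then have i: "i \<le> m" by simp
    then have "(?M *\<^sub>v vec (Suc m) c) $ i = L i (\<Sum>k\<le>m. smult (c k) (p k))"
      using lin by (simp add: scalar_prod_def atLeast0LessThan lessThan_Suc_atMost mult.commute)
    then show "(?M *\<^sub>v vec (Suc m) c) $ i = 0\<^sub>v (Suc m) $ i"
      using i c(2) L0 by simp
  qed simp
  moreover have "vec (Suc m) c \<noteq> 0\<^sub>v (Suc m)"
    using c(1) by (auto simp: vec_eq_iff less_Suc_eq_le)
  ultimately show ?thesis
    by (subst det_0_iff_vec_prod_zero[of _ "Suc m"]) (auto intro!: exI[of _ "vec (Suc m) c"])
qed

lemma poly_higher_pderiv_lincomb:
  "poly ((pderiv ^^ i) (\<Sum>k\<in>K. smult (c k) (p k))) x = (\<Sum>k\<in>K. c k * poly ((pderiv ^^ i) (p k)) x)"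
  by (simp add: higher_pderiv_sum higher_pderiv_smult poly_sum)

lemma
  assumes "\<forall>j\<le>m. q j = (\<Sum>k\<le>m. smult (C j k) (p k))"
  shows wronskian_change_basis:
      "wronskian q m x = wronskian p m x * det (mat (Suc m) (Suc m) (\<lambda>(k, j). C j k))"
    and casoratian_change_basis:
      "casoratian q m x = casoratian p m x * det (mat (Suc m) (Suc m) (\<lambda>(k, j). C j k))"
  unfolding wronskian_def casoratian_def
  using functional_matrix_change_basis[OF _ assms, of "\<lambda>i r. poly ((pderiv ^^ i) r) x"]
    functional_matrix_change_basis[OF _ assms, of "\<lambda>i r. poly r (x + real i)"]
  by (simp_all add: poly_higher_pderiv_lincomb poly_sum det_mult[of _ "Suc m"])

lemma
  assumes "poly_lin_dep p m"
  shows wronskian_lin_dep: "wronskian p m x = 0"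
    and casoratian_lin_dep: "casoratian p m x = 0"
  unfolding wronskian_def casoratian_def
  using det_functional_matrix_lin_dep[OF _ assms, of "\<lambda>i r. poly ((pderiv ^^ i) r) x"]
    det_functional_matrix_lin_dep[OF _ assms, of "\<lambda>i r. poly r (x + real i)"]
  by (simp_all add: poly_higher_pderiv_lincomb poly_sum)

section \<open>Elimination to distinct degrees\<close>

definition poly_in_span :: "(nat \<Rightarrow> 'a :: comm_ring_1 poly) \<Rightarrow> nat set \<Rightarrow> 'a poly \<Rightarrow> bool" where
  "poly_in_span p I v \<longleftrightarrow> (\<exists>c. v = (\<Sum>i\<in>I. smult (c i) (p i)))"

definition poly_lin_indep :: "(nat \<Rightarrow> 'a :: comm_ring_1 poly) \<Rightarrow> nat set \<Rightarrow> bool" where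
  "poly_lin_indep p I \<longleftrightarrow> (\<forall>c. (\<Sum>i\<in>I. smult (c i) (p i)) = 0 \<longrightarrow> (\<forall>i\<in>I. c i = 0))"

lemma poly_lin_indep_atMost_iff: "poly_lin_indep p {..m} \<longleftrightarrow> \<not> poly_lin_dep p m"
  unfolding poly_lin_indep_def poly_lin_dep_def by auto

lemma sum_smult_indicator:
  assumes "finite I" "k \<in> I"
  shows "(\<Sum>i\<in>I. smult (if i = k then a else 0) (p i)) = smult a (p k)"
proof -
  have "(\<Sum>i\<in>I. smult (if i = k then a else 0) (p i)) = (\<Sum>i\<in>I. if i = k then smult a (p i) else 0)"
    by (rule sum.cong) auto
  then show ?thesis
    using assms by simp
qed

lemma smult_sum_right: "smult a (\<Sum>i\<in>S. f i) = (\<Sum>i\<in>S. smult a (f i))"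
  by (induction S rule: infinite_finite_induct) (simp_all add: smult_add_right)

lemma poly_in_span_base: "finite I \<Longrightarrow> k \<in> I \<Longrightarrow> poly_in_span p I (p k)"
  unfolding poly_in_span_def
  by (rule exI[of _ "\<lambda>i. if i = k then 1 else 0"]) (simp add: sum_smult_indicator)

lemma poly_in_span_diff_smult:
  assumes "poly_in_span p I u" "poly_in_span p I v"
  shows "poly_in_span p I (u - smult a v)"
proof -
  obtain c d where "u = (\<Sum>i\<in>I. smult (c i) (p i))" "v = (\<Sum>i\<in>I. smult (d i) (p i))"
    using assms unfolding poly_in_span_def by blast
  then have "u - smult a v = (\<Sum>i\<in>I. smult (c i - a * d i) (p i))"
    by (simp add: smult_sum_right smult_diff_left sum_subtractf)
  then show ?thesis
    unfolding poly_in_span_def by (rule exI[of _ "\<lambda>i. c i - a * d i"])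
qed

lemma poly_in_span_trans:
  assumes "finite J" "\<forall>k\<in>J. poly_in_span p I (p' k)" "poly_in_span p' J v"
  shows "poly_in_span p I v"
proof -
  obtain C where C: "\<forall>k\<in>J. p' k = (\<Sum>i\<in>I. smult (C k i) (p i))"
    using bchoice[OF assms(2)[unfolded poly_in_span_def]] by blast
  obtain d where d: "v = (\<Sum>k\<in>J. smult (d k) (p' k))"
    using assms(3) unfolding poly_in_span_def by blast
  have "v = (\<Sum>k\<in>J. \<Sum>i\<in>I. smult (d k * C k i) (p i))"
    unfolding d using C by (intro sum.cong) (auto simp: smult_sum_right)
  also have "\<dots> = (\<Sum>i\<in>I. smult (\<Sum>k\<in>J. d k * C k i) (p i))"
    by (subst sum.swap) (simp add: smult_sum)
  finally show ?thesis
    unfolding poly_in_span_def by (rule exI[of _ "\<lambda>i. \<Sum>k\<in>J. d k * C k i"])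
qed

lemma degree_le_if_poly_in_span:
  assumes "\<forall>i\<in>I. degree (p i) \<le> n" "poly_in_span p I v"
  shows "degree v \<le> n"
proof -
  obtain c where "v = (\<Sum>i\<in>I. smult (c i) (p i))"
    using assms(2) unfolding poly_in_span_def by blast
  then show ?thesis
    using assms(1) by (cases "finite I") (auto intro!: degree_sum_le order_trans[OF degree_smult_le])
qed

lemma poly_lin_indep_nonzero:
  assumes "finite I" "poly_lin_indep p I" "k \<in> I"
  shows "p k \<noteq> 0"
proof
  assume "p k = 0"
  then have "(\<Sum>i\<in>I. smult (if i = k then 1 else 0) (p i)) = 0"
    using assms(1,3) by (simp add: sum_smult_indicator)
  then show False
    using assms(2,3) unfolding poly_lin_indep_def by force
qed

lemma poly_lin_indep_eliminate:
  assumes "finite I" "i0 \<in> I" "poly_lin_indep p I"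
  shows "poly_lin_indep (\<lambda>j. p j - smult (a j) (p i0)) (I - {i0})"
  unfolding poly_lin_indep_def
proof (intro allI impI)
  fix c assume c: "(\<Sum>j\<in>I - {i0}. smult (c j) (p j - smult (a j) (p i0))) = 0"
  define c' where "c' = c(i0 := - (\<Sum>j\<in>I - {i0}. c j * a j))"
  have "(\<Sum>j\<in>I - {i0}. smult (c' j) (p j)) = (\<Sum>j\<in>I - {i0}. smult (c j) (p j))"
    by (intro sum.cong) (auto simp: c'_def)
  then have "(\<Sum>i\<in>I. smult (c' i) (p i)) = smult (c' i0) (p i0) + (\<Sum>j\<in>I - {i0}. smult (c j) (p j))"
    using assms(1,2) by (simp add: sum.remove)
  also have "\<dots> = (\<Sum>j\<in>I - {i0}. smult (c j) (p j - smult (a j) (p i0)))"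
    by (simp add: c'_def smult_diff_right sum_subtractf smult_sum)
  finally have "(\<Sum>i\<in>I. smult (c' i) (p i)) = 0"
    using c by simp
  then have "\<forall>i\<in>I. c' i = 0"
    using assms(3) unfolding poly_lin_indep_def by blast
  then show "\<forall>j\<in>I - {i0}. c j = 0"
    unfolding c'_def by (metis DiffE fun_upd_other singletonI)
qed

lemma degree_eliminate_lead_less:
  fixes u v :: "'a :: field poly"
  assumes "degree v \<le> degree u" "u \<noteq> 0" "v - smult (coeff v (degree u) / lead_coeff u) u \<noteq> 0"
  shows "degree (v - smult (coeff v (degree u) / lead_coeff u) u) < degree u"
proof -
  let ?w = "v - smult (coeff v (degree u) / lead_coeff u) u"
  have "degree ?w \<le> degree u"
    using assms(1) by (intro degree_diff_le) auto
  moreover have "coeff ?w (degree u) = 0"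
    using assms(2) by simp
  ultimately show ?thesis
    using assms(3) by (metis le_neq_implies_less leading_coeff_0_iff)
qed

lemma exists_span_distinct_degrees:
  fixes p :: "nat \<Rightarrow> 'a :: field poly"
  assumes "finite I" "poly_lin_indep p I"
  shows "\<exists>q. (\<forall>j\<in>I. poly_in_span p I (q j) \<and> q j \<noteq> 0) \<and> inj_on (\<lambda>j. degree (q j)) I \<and>
    (\<forall>i\<in>I. \<exists>j\<in>I. degree (p i) \<le> degree (q j))"
  using assms
proof (induction I arbitrary: p rule: finite_psubset_induct)
  case (psubset I)
  show ?case
  proof (cases "I = {}")
    case False
    define D where "D = Max ((\<lambda>i. degree (p i)) ` I)"
    have "D \<in> (\<lambda>i. degree (p i)) ` I"
      unfolding D_def using psubset.hyps False by (intro Max_in) auto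
    then obtain i0 where i0: "i0 \<in> I" "degree (p i0) = D"
      by auto
    have le_D: "degree (p i) \<le> D" if "i \<in> I" for i
      unfolding D_def using psubset.hyps that by simp
    have p_i0: "p i0 \<noteq> 0"
      using poly_lin_indep_nonzero[OF psubset.hyps psubset.prems i0(1)] .
    define p' where "p' j = p j - smult (coeff (p j) D / lead_coeff (p i0)) (p i0)" for j
    have indep: "poly_lin_indep p' (I - {i0})"
      unfolding p'_def using psubset i0 by (intro poly_lin_indep_eliminate)
    have deg_p': "degree (p' j) < D" if "j \<in> I - {i0}" for j
      unfolding p'_def i0(2)[symmetric]
      using that le_D i0 p_i0 poly_lin_indep_nonzero[OF _ indep that] psubset.hyps
      by (intro degree_eliminate_lead_less) (auto simp: p'_def)
    obtain q' where q': "\<forall>j\<in>I - {i0}. poly_in_span p' (I - {i0}) (q' j) \<and> q' j \<noteq> 0"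
        "inj_on (\<lambda>j. degree (q' j)) (I - {i0})"
      using psubset.IH[OF _ indep] i0(1) by blast
    have deg_q': "degree (q' j) < D" if "j \<in> I - {i0}" for j
      using degree_le_if_poly_in_span[of "I - {i0}" p' "D - 1"] deg_p' q'(1) that by fastforce
    have span_p': "\<forall>k\<in>I - {i0}. poly_in_span p I (p' k)"
      unfolding p'_def using psubset.hyps i0(1) by (auto intro!: poly_in_span_diff_smult poly_in_span_base)
    define q where "q = q'(i0 := p i0)"
    have "\<forall>j\<in>I. poly_in_span p I (q j) \<and> q j \<noteq> 0"
      unfolding q_def using q'(1) poly_in_span_trans[OF _ span_p'] psubset.hyps i0(1) p_i0
      by (auto intro: poly_in_span_base)
    moreover have "inj_on (\<lambda>j. degree (q j)) I"
      using q'(2) deg_q' i0 unfolding q_def inj_on_def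
      by (metis fun_upd_other fun_upd_same insert_Diff insert_iff less_irrefl)
    moreover have "\<forall>i\<in>I. \<exists>j\<in>I. degree (p i) \<le> degree (q j)"
      using i0 le_D unfolding q_def by auto
    ultimately show ?thesis
      by blast
  qed simp
qed

lemma poly_lin_dep_if_degree_less:
  fixes p :: "nat \<Rightarrow> real poly"
  assumes "\<forall>i\<le>m. degree (p i) \<le> n" "n < m"
  shows "poly_lin_dep p m"
proof (rule ccontr)
  assume "\<not> poly_lin_dep p m"
  then have "poly_lin_indep p {..m}"
    using poly_lin_indep_atMost_iff by blast
  then obtain q where q: "\<forall>j\<in>{..m}. poly_in_span p {..m} (q j) \<and> q j \<noteq> 0"
      "inj_on (\<lambda>j. degree (q j)) {..m}"
    using exists_span_distinct_degrees[of "{..m}" p] by blast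
  have "(\<lambda>j. degree (q j)) ` {..m} \<subseteq> {..n}"
    using assms(1) q(1) degree_le_if_poly_in_span[of "{..m}" p n] by auto
  then have "card {..m} \<le> card {..n}"
    using card_inj_on_le[OF q(2)] by blast
  then show False
    using assms(2) by simp
qed

lemma LEAST_polys_upto_max_degree:
  fixes p :: "nat \<Rightarrow> real poly"
  assumes "n = (LEAST k. \<forall>i\<le>m. p i \<in> polys_upto k)"
  shows "\<forall>i\<le>m. degree (p i) \<le> n" and "\<exists>i\<le>m. degree (p i) = n"
proof -
  have n: "n = Max ((\<lambda>i. degree (p i)) ` {..m})"
    unfolding assms polys_upto_def by (rule Least_equality) (auto simp: Max_le_iff Max_ge_iff)
  then show "\<forall>i\<le>m. degree (p i) \<le> n"
    by simp
  have "Max ((\<lambda>i. degree (p i)) ` {..m}) \<in> (\<lambda>i. degree (p i)) ` {..m}"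
    by (intro Max_in) auto
  then obtain i where "i \<in> {..m}" "Max ((\<lambda>i. degree (p i)) ` {..m}) = degree (p i)"
    by (rule imageE)
  then show "\<exists>i\<le>m. degree (p i) = n"
    using n by auto
qed

lemma degree_le_if_span_eq_polys_upto:
  assumes "poly_span p m = polys_upto k" "i \<le> m"
  shows "degree (p i) \<le> k"
proof -
  have "p i = (\<Sum>j\<le>m. smult (if j = i then 1 else 0) (p j))"
    using assms(2) by (simp add: sum_smult_indicator)
  then have "p i \<in> poly_span p m"
    unfolding poly_span_def by (intro CollectI exI[of _ "\<lambda>j. if j = i then 1 else 0"]) simp
  then show ?thesis
    using assms(1) unfolding polys_upto_def by auto
qed

section \<open>Cauchy--Binet expansion\<close>

definition bounded_maps :: "nat \<Rightarrow> nat \<Rightarrow> (nat \<Rightarrow> nat) set" where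
  "bounded_maps r s = {f. (\<forall>i<r. f i < s) \<and> (\<forall>i\<ge>r. f i = i)}"

lemma bounded_maps_eq:
  "bounded_maps r s = {f. (\<forall>i\<in>{0..<r}. f i \<in> {0..<s}) \<and> (\<forall>i. i \<notin> {0..<r} \<longrightarrow> f i = i)}"
  unfolding bounded_maps_def by auto

lemma finite_bounded_maps: "finite (bounded_maps r s)"
  unfolding bounded_maps_eq by (rule finite_bounded_functions) auto

lemma bounded_maps_mono: "s \<le> s' \<Longrightarrow> bounded_maps r s \<subseteq> bounded_maps r s'"
  unfolding bounded_maps_def by auto

lemma det_non_inj_columns:
  assumes "\<not> inj_on f {0..<r}"
  shows "det (mat r r (\<lambda>(i, j). G i (f j))) = (0 :: 'a :: comm_ring_1)"
proof -
  obtain j1 j2 where j: "j1 < r" "j2 < r" "j1 \<noteq> j2" "f j1 = f j2"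
    using assms unfolding inj_on_def by auto
  show ?thesis
    by (rule det_identical_columns[OF _ j(3) j(1) j(2)]) (use j in \<open>auto intro!: eq_vecI\<close>)
qed

text \<open>Cauchy--Binet, before grouping the column maps by their image.\<close>
lemma det_mult_sum_bounded_maps:
  fixes A F :: "'a :: comm_ring_1 mat"
  assumes A: "A \<in> carrier_mat r s" and F: "F \<in> carrier_mat s r"
  shows "det (A * F) =
    (\<Sum>f\<in>bounded_maps r s. (\<Prod>j\<in>{0..<r}. F $$ (f j, j)) * det (mat r r (\<lambda>(i, j). A $$ (i, f j))))"
proof -
  have "det (A * F) = det (transpose_mat F * transpose_mat A)"
    using A F by (metis det_transpose mult_carrier_mat transpose_mult)
  also have "transpose_mat F * transpose_mat A =
      mat\<^sub>r r r (\<lambda>j. finsum_vec TYPE('a) r (\<lambda>k. F $$ (k, j) \<cdot>\<^sub>v col A k) {0..<s})"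
    using A F by (subst mat_mul_finsum_alt[of _ r s _ r]) (auto intro!: eq_matI simp: index_finsum_vec)
  also have "det \<dots> = (\<Sum>f\<in>bounded_maps r s. det (mat\<^sub>r r r (\<lambda>j. F $$ (f j, j) \<cdot>\<^sub>v col A (f j))))"
    unfolding bounded_maps_eq by (rule det_linear_rows_sum) (use A in auto)
  also have "\<dots> = (\<Sum>f\<in>bounded_maps r s.
      (\<Prod>j\<in>{0..<r}. F $$ (f j, j)) * det (mat r r (\<lambda>(i, j). A $$ (i, f j))))"
  proof (rule sum.cong[OF refl])
    fix f assume f: "f \<in> bounded_maps r s"
    have "mat\<^sub>r r r (\<lambda>j. col A (f j)) = transpose_mat (mat r r (\<lambda>(i, j). A $$ (i, f j)))"
      using A f unfolding bounded_maps_def by (intro eq_matI) auto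
    then show "det (mat\<^sub>r r r (\<lambda>j. F $$ (f j, j) \<cdot>\<^sub>v col A (f j))) =
        (\<Prod>j\<in>{0..<r}. F $$ (f j, j)) * det (mat r r (\<lambda>(i, j). A $$ (i, f j)))"
      using A by (subst det_rows_mul) (auto simp: det_transpose[of _ r])
  qed
  finally show ?thesis .
qed

lemma compose_bounded_map_mem:
  assumes \<kappa>: "inj_on \<kappa> {0..<r}" "\<kappa> ` {0..<r} \<subseteq> {0..<s}"
    and g: "g \<in> bounded_maps r r" "inj_on g {0..<r}"
  shows "(\<lambda>i. if i < r then \<kappa> (g i) else i) \<in>
    {f\<in>bounded_maps r s. inj_on f {0..<r} \<and> f ` {0..<r} = \<kappa> ` {0..<r}}"
proof -
  define f where "f = (\<lambda>i. if i < r then \<kappa> (g i) else i)"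
  have "g ` {0..<r} = {0..<r}"
    using g unfolding bounded_maps_def by (intro card_subset_eq) (auto simp: card_image)
  moreover have "f ` {0..<r} = \<kappa> ` g ` {0..<r}"
    unfolding f_def by (auto simp: image_image)
  moreover have "f \<in> bounded_maps r s"
    using g \<kappa>(2) unfolding f_def bounded_maps_def by (auto simp: subset_eq)
  moreover have "inj_on f {0..<r}"
  proof (rule inj_onI)
    fix i j assume ij: "i \<in> {0..<r}" "j \<in> {0..<r}" "f i = f j"
    then have "g i \<in> {0..<r}" "g j \<in> {0..<r}"
      using g unfolding bounded_maps_def by auto
    then have "g i = g j"
      using ij \<kappa>(1) unfolding f_def by (auto dest: inj_onD)
    then show "i = j"
      using g ij by (auto dest: inj_onD)
  qed
  ultimately show ?thesis
    unfolding f_def by simp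
qed

lemma bij_betw_compose_bounded_maps:
  assumes \<kappa>: "inj_on \<kappa> {0..<r}" "\<kappa> ` {0..<r} \<subseteq> {0..<s}"
  shows "bij_betw (\<lambda>g i. if i < r then \<kappa> (g i) else i) {g\<in>bounded_maps r r. inj_on g {0..<r}}
    {f\<in>bounded_maps r s. inj_on f {0..<r} \<and> f ` {0..<r} = \<kappa> ` {0..<r}}"
proof -
  let ?P = "{g\<in>bounded_maps r r. inj_on g {0..<r}}"
  let ?E = "{f\<in>bounded_maps r s. inj_on f {0..<r} \<and> f ` {0..<r} = \<kappa> ` {0..<r}}"
  define lift where "lift = (\<lambda>g i. if i < r then \<kappa> (g i) else i)"
  define unlift where "unlift = (\<lambda>f i. if i < r then inv_into {0..<r} \<kappa> (f i) else i)"
  have "bij_betw lift ?P ?E"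
  proof (rule bij_betw_byWitness[where f' = unlift])
    show "\<forall>g\<in>?P. unlift (lift g) = g"
    proof (intro ballI ext)
      fix g i assume "g \<in> ?P"
      then show "unlift (lift g) i = g i"
        using \<kappa>(1) unfolding lift_def unlift_def bounded_maps_def by auto
    qed
    show "lift ` ?P \<subseteq> ?E"
      unfolding lift_def using compose_bounded_map_mem[OF \<kappa>] by blast
    have f_in: "f i \<in> \<kappa> ` {0..<r}" if "f \<in> ?E" "i < r" for f i
      using that by auto
    show "\<forall>f\<in>?E. lift (unlift f) = f"
    proof (intro ballI ext)
      fix f i assume f: "f \<in> ?E"
      show "lift (unlift f) i = f i"
        using f f_in[OF f] unfolding lift_def unlift_def bounded_maps_def by (simp add: f_inv_into_f)
    qed
    show "unlift ` ?E \<subseteq> ?P"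
    proof (rule image_subsetI)
      fix f assume f: "f \<in> ?E"
      have "unlift f \<in> bounded_maps r r"
        using f_in[OF f] unfolding unlift_def bounded_maps_def
        by (auto intro: inv_into_into[where A = "{0..<r}", simplified])
      moreover have "inj_on (unlift f) {0..<r}"
      proof (rule inj_onI)
        fix i j assume ij: "i \<in> {0..<r}" "j \<in> {0..<r}" "unlift f i = unlift f j"
        then have "f i = f j"
          using f_in[OF f] unfolding unlift_def by (metis atLeastLessThan_iff f_inv_into_f)
        then show "i = j"
          using f ij by (auto dest: inj_onD)
      qed
      ultimately show "unlift f \<in> ?P"
        by simp
    qed
  qed
  then show ?thesis
    unfolding lift_def .
qed

text \<open>The Cauchy--Binet term of the column set \<open>\<kappa> ` {0..<r}\<close>.\<close>
lemma det_mult_selected_sum_bounded_maps: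
  fixes A B :: "'a :: comm_ring_1 mat"
  assumes A: "A \<in> carrier_mat r s" and B: "B \<in> carrier_mat s r"
    and \<kappa>: "inj_on \<kappa> {0..<r}" "\<kappa> ` {0..<r} \<subseteq> {0..<s}"
  shows "det (mat r r (\<lambda>(i, l). A $$ (i, \<kappa> l)) * mat r r (\<lambda>(l, j). B $$ (\<kappa> l, j))) =
    (\<Sum>f\<in>{f\<in>bounded_maps r s. inj_on f {0..<r} \<and> f ` {0..<r} = \<kappa> ` {0..<r}}.
       (\<Prod>j\<in>{0..<r}. B $$ (f j, j)) * det (mat r r (\<lambda>(i, j). A $$ (i, f j))))"
proof -
  let ?P = "{g\<in>bounded_maps r r. inj_on g {0..<r}}"
  define lift where "lift = (\<lambda>g i. if i < r then \<kappa> (g i) else i)"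
  define summand where
    "summand f = (\<Prod>j\<in>{0..<r}. B $$ (f j, j)) * det (mat r r (\<lambda>(i, j). A $$ (i, f j)))" for f
  let ?A\<kappa> = "mat r r (\<lambda>(i, l). A $$ (i, \<kappa> l))" and ?B\<kappa> = "mat r r (\<lambda>(l, j). B $$ (\<kappa> l, j))"
  have "det (?A\<kappa> * ?B\<kappa>) = (\<Sum>g\<in>bounded_maps r r.
      (\<Prod>j\<in>{0..<r}. ?B\<kappa> $$ (g j, j)) * det (mat r r (\<lambda>(i, j). ?A\<kappa> $$ (i, g j))))"
    by (rule det_mult_sum_bounded_maps) auto
  also have "\<dots> = (\<Sum>g\<in>bounded_maps r r. summand (lift g))"
    unfolding summand_def lift_def bounded_maps_def
    by (intro sum.cong refl arg_cong2[where f = "(*)"] prod.cong arg_cong[where f = det] eq_matI) auto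
  also have "\<dots> = (\<Sum>g\<in>?P. summand (lift g))"
  proof (rule sum.mono_neutral_right[OF finite_bounded_maps], blast, intro ballI)
    fix g assume "g \<in> bounded_maps r r - ?P"
    then obtain i j where "i < r" "j < r" "i \<noteq> j" "g i = g j"
      unfolding bounded_maps_def inj_on_def by auto
    then have "\<not> inj_on (lift g) {0..<r}"
      unfolding lift_def inj_on_def by (metis atLeastLessThan_iff le0)
    then show "summand (lift g) = 0"
      unfolding summand_def using det_non_inj_columns[of "lift g" r "\<lambda>i k. A $$ (i, k)"] by simp
  qed
  also have "\<dots> = (\<Sum>f\<in>{f\<in>bounded_maps r s. inj_on f {0..<r} \<and> f ` {0..<r} = \<kappa> ` {0..<r}}.
      summand f)"
    unfolding lift_def by (rule sum.reindex_bij_betw[OF bij_betw_compose_bounded_maps[OF \<kappa>]])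
  finally show ?thesis
    unfolding summand_def .
qed

section \<open>Polynomial bases with a gap in the degrees\<close>

lemma card_le_degree_if_roots:
  fixes p :: "'a :: idom poly"
  assumes "p \<noteq> 0" "finite A" "inj_on t A" "\<forall>j\<in>A. poly p (t j) = 0"
  shows "card A \<le> degree p"
proof -
  have "card A = card (t ` A)"
    using assms(3) by (simp add: card_image)
  also have "\<dots> \<le> card {x. poly p x = 0}"
    using assms by (intro card_mono poly_roots_finite) auto
  also have "\<dots> \<le> degree p"
    using assms(1) by (rule card_poly_roots_bound)
  finally show ?thesis .
qed

lemma
  fixes t :: "nat \<Rightarrow> 'a :: idom"
  shows degree_prod_linear_factors: "degree (\<Prod>j\<le>m. [:- t j, 1:]) = Suc m"
    and lead_coeff_prod_linear_factors: "lead_coeff (\<Prod>j\<le>m. [:- t j, 1:]) = 1"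
    and coeff_prod_linear_factors: "coeff (\<Prod>j\<le>m. [:- t j, 1:]) m = - (\<Sum>j\<le>m. t j)"
proof -
  show degree: "degree (\<Prod>j\<le>m. [:- t j, 1:]) = Suc m" for m
    by (subst degree_prod_eq_sum_degree) auto
  show lead: "lead_coeff (\<Prod>j\<le>m. [:- t j, 1:]) = 1" for m
    by (simp add: lead_coeff_prod)
  show "coeff (\<Prod>j\<le>m. [:- t j, 1:]) m = - (\<Sum>j\<le>m. t j)"
  proof (induction m)
    case (Suc m)
    have "coeff (\<Prod>j\<le>Suc m. [:- t j, 1:]) (Suc m) =
        - t (Suc m) * coeff (\<Prod>j\<le>m. [:- t j, 1:]) (Suc m) + coeff (\<Prod>j\<le>m. [:- t j, 1:]) m"
      by (simp add: atMost_Suc mult.commute[of _ "[:- t (Suc m), 1:]"])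
    then show ?case
      using Suc.IH lead[of m] degree[of m] by simp
  qed simp
qed

lemma poly_eq_smult_prod_roots:
  fixes p :: "'a :: idom poly"
  assumes t: "inj_on t {..m}" and roots: "\<forall>j\<le>m. poly p (t j) = 0" and deg: "degree p \<le> Suc m"
  shows "p = smult (coeff p (Suc m)) (\<Prod>j\<le>m. [:- t j, 1:])"
proof (rule ccontr)
  let ?R = "p - smult (coeff p (Suc m)) (\<Prod>j\<le>m. [:- t j, 1:])"
  assume "p \<noteq> smult (coeff p (Suc m)) (\<Prod>j\<le>m. [:- t j, 1:])"
  then have "?R \<noteq> 0" by simp
  moreover have "degree ?R \<le> m"
  proof (rule degree_le, intro allI impI)
    fix i assume "m < i"
    then consider "i = Suc m" | "Suc m < i" by linarith
    then show "coeff ?R i = 0"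
      using deg degree_prod_linear_factors[of t m] lead_coeff_prod_linear_factors[of t m]
      by cases (auto simp: coeff_eq_0)
  qed
  moreover have "\<forall>j\<in>{..m}. poly ?R (t j) = 0"
    using roots by (auto simp: poly_prod)
  ultimately show False
    using card_le_degree_if_roots[OF _ _ t, of ?R] by simp
qed

lemma sum_smult_eq_0_degree_eq_index:
  fixes \<phi> :: "nat \<Rightarrow> 'a :: idom poly"
  assumes "\<forall>l<k. \<phi> l \<noteq> 0 \<and> degree (\<phi> l) = l" and "(\<Sum>l<k. smult (v l) (\<phi> l)) = 0"
  shows "\<forall>l<k. v l = 0"
  using assms
proof (induction k)
  case (Suc k)
  have "degree (\<Sum>l<k. smult (v l) (\<phi> l)) < k \<or> k = 0"
  proof (cases k)
    case (Suc k')
    have "degree (\<Sum>l<k. smult (v l) (\<phi> l)) \<le> k'"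
      using Suc.prems(1) \<open>k = Suc k'\<close> by (intro degree_sum_le) (auto intro: order_trans[OF degree_smult_le])
    then show ?thesis using \<open>k = Suc k'\<close> by simp
  qed simp
  then have "coeff (\<Sum>l<k. smult (v l) (\<phi> l)) k = 0"
    by (auto simp: coeff_eq_0)
  then have "v k * lead_coeff (\<phi> k) = 0"
    using arg_cong[OF Suc.prems(2), of "\<lambda>p. coeff p k"] Suc.prems(1) by simp
  moreover have "lead_coeff (\<phi> k) \<noteq> 0"
    using Suc.prems(1) by (metis lessI leading_coeff_0_iff)
  ultimately have "v k = 0"
    by simp
  then show ?case
    using Suc by (simp add: less_Suc_eq)
qed simp

lemma det_poly_eval_gap_basis_nonzero:
  fixes \<phi> :: "nat \<Rightarrow> 'a :: idom poly" and t :: "nat \<Rightarrow> 'a"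
  assumes t: "inj_on t {..m}"
    and low: "\<forall>l<m. \<phi> l \<noteq> 0 \<and> degree (\<phi> l) = l"
    and top: "degree (\<phi> m) = Suc m"
    and gap: "coeff (\<phi> m) m \<noteq> - lead_coeff (\<phi> m) * (\<Sum>j\<le>m. t j)"
  shows "det (mat (Suc m) (Suc m) (\<lambda>(j, l). poly (\<phi> l) (t j))) \<noteq> 0"
proof
  let ?M = "mat (Suc m) (Suc m) (\<lambda>(j, l). poly (\<phi> l) (t j))"
  assume "det ?M = 0"
  then obtain v where v: "v \<in> carrier_vec (Suc m)" "v \<noteq> 0\<^sub>v (Suc m)" "?M *\<^sub>v v = 0\<^sub>v (Suc m)"
    using det_0_iff_vec_prod_zero[of ?M "Suc m"] by auto
  define lower where "lower = (\<Sum>l<m. smult (v $ l) (\<phi> l))"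
  define \<psi> where "\<psi> = smult (v $ m) (\<phi> m) + lower"
  have lower_coeff: "coeff lower k = 0" if "m \<le> k" for k
    unfolding lower_def coeff_sum using low that by (auto intro!: sum.neutral coeff_eq_0)
  have "\<psi> = (\<Sum>l\<le>m. smult (v $ l) (\<phi> l))"
    unfolding \<psi>_def lower_def by (simp add: lessThan_Suc_atMost[symmetric])
  then have "poly \<psi> (t j) = (?M *\<^sub>v v) $ j" if "j \<le> m" for j
    using v(1) that by (simp add: poly_sum scalar_prod_def atLeast0LessThan lessThan_Suc_atMost mult.commute)
  then have roots: "\<forall>j\<le>m. poly \<psi> (t j) = 0"
    using v(3) by simp
  have "degree \<psi> \<le> Suc m"
  proof (rule degree_le, intro allI impI)
    fix i assume "Suc m < i"
    then show "coeff \<psi> i = 0"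
      using top lower_coeff by (simp add: \<psi>_def coeff_eq_0)
  qed
  then have \<psi>_eq: "\<psi> = smult (coeff \<psi> (Suc m)) (\<Prod>j\<le>m. [:- t j, 1:])"
    using t roots by (rule poly_eq_smult_prod_roots[rotated -1])
  have top_coeff: "coeff \<psi> (Suc m) = v $ m * lead_coeff (\<phi> m)"
    using top lower_coeff by (simp add: \<psi>_def)
  have "v $ m * coeff (\<phi> m) m = coeff \<psi> m"
    using lower_coeff by (simp add: \<psi>_def)
  also have "\<dots> = - v $ m * lead_coeff (\<phi> m) * (\<Sum>j\<le>m. t j)"
    by (subst \<psi>_eq) (simp add: top_coeff coeff_prod_linear_factors)
  finally have "v $ m * (coeff (\<phi> m) m + lead_coeff (\<phi> m) * (\<Sum>j\<le>m. t j)) = 0"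
    by (simp add: algebra_simps)
  moreover have "coeff (\<phi> m) m + lead_coeff (\<phi> m) * (\<Sum>j\<le>m. t j) \<noteq> 0"
    using gap by (simp add: eq_neg_iff_add_eq_0)
  ultimately have "v $ m = 0"
    by simp
  then have "lower = 0"
    using \<psi>_eq top_coeff by (simp add: \<psi>_def)
  then have "\<forall>l<m. v $ l = 0"
    using low unfolding lower_def by (rule sum_smult_eq_0_degree_eq_index[rotated])
  with \<open>v $ m = 0\<close> have "v = 0\<^sub>v (Suc m)"
    using v(1) by (intro eq_vecI) (auto simp: less_Suc_eq)
  with v(2) show False ..
qed

section \<open>Falling factorials and Taylor's formula\<close>

definition falling_poly :: "nat \<Rightarrow> 'a :: comm_ring_1 poly" where
  "falling_poly k = (\<Prod>l<k. [:- of_nat l, 1:])"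

lemma poly_falling_poly: "poly (falling_poly k) x = (\<Prod>l<k. x - of_nat l)"
  unfolding falling_poly_def poly_prod by simp

lemma degree_falling_poly [simp]: "degree (falling_poly k :: 'a :: idom poly) = k"
  unfolding falling_poly_def by (subst degree_prod_eq_sum_degree) auto

lemma lead_coeff_falling_poly [simp]: "lead_coeff (falling_poly k :: 'a :: idom poly) = 1"
  unfolding falling_poly_def by (simp add: lead_coeff_prod)

lemma coeff_falling_poly_self [simp]: "coeff (falling_poly k :: 'a :: idom poly) k = 1"
  using lead_coeff_falling_poly[of k] by simp

lemma falling_poly_nonzero [simp]: "falling_poly k \<noteq> (0 :: 'a :: idom poly)"
  using lead_coeff_falling_poly[of k] by (metis leading_coeff_0_iff zero_neq_one)

lemma coeff_falling_poly_Suc: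
  "coeff (falling_poly (Suc m) :: 'a :: idom poly) m = - (\<Sum>l\<le>m. of_nat l)"
  unfolding falling_poly_def lessThan_Suc_atMost by (rule coeff_prod_linear_factors)

lemma poly_falling_poly_of_nat_less:
  "i < k \<Longrightarrow> poly (falling_poly k) (of_nat i :: 'a :: comm_ring_1) = 0"
  unfolding poly_falling_poly by (rule prod_zero) auto

lemma pochhammer_eq_poly_falling_poly:
  assumes "k \<le> d"
  shows "pochhammer (of_nat (Suc (d - k))) k = poly (falling_poly k) (of_nat d :: 'a :: comm_ring_1)"
  using assms
proof (induction k)
  case (Suc k)
  have "of_nat (Suc (d - Suc k)) = (of_nat d - of_nat k :: 'a)"
    and "of_nat d - of_nat k + 1 = (of_nat (Suc (d - k)) :: 'a)"
    using Suc.prems by (simp_all add: of_nat_diff)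
  then show ?case
    using Suc by (simp add: pochhammer_rec poly_falling_poly del: of_nat_Suc)
qed (simp add: poly_falling_poly)

lemma poly_falling_poly_self: "poly (falling_poly k) (of_nat k :: 'a :: {comm_ring_1, semiring_char_0}) = fact k"
  using pochhammer_eq_poly_falling_poly[of k k, where 'a = 'a] by (simp add: pochhammer_fact)

lemma higher_pderiv_eq_0: "degree p < k \<Longrightarrow> (pderiv ^^ k) p = 0"
  by (rule poly_eqI) (simp add: coeff_higher_pderiv coeff_eq_0)

lemma coeff_higher_pderiv_degree_minus:
  "coeff ((pderiv ^^ k) p) (degree p - k) = poly (falling_poly k) (of_nat (degree p)) * lead_coeff p"
proof (cases "k \<le> degree p")
  case True
  then show ?thesis
    unfolding coeff_higher_pderiv by (simp add: pochhammer_eq_poly_falling_poly del: of_nat_Suc)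
next
  case False
  then show ?thesis
    by (simp add: higher_pderiv_eq_0 poly_falling_poly_of_nat_less)
qed

lemma poly_add_Taylor:
  fixes p :: "real poly"
  assumes "degree p < s"
  shows "poly p (x + t) = (\<Sum>k<s. t ^ k / fact k * poly ((pderiv ^^ k) p) x)"
proof -
  define D where "D k u = poly ((pderiv ^^ k) p) (x + u)" for k u
  have "((\<lambda>u. poly ((pderiv ^^ k) p) (x + u)) has_real_derivative
      poly (pderiv ((pderiv ^^ k) p)) (x + u) * 1) (at u)" for k u
    by (rule DERIV_chain2[OF poly_DERIV]) (auto intro!: derivative_eq_intros)
  then have "(D k has_real_derivative D (Suc k) u) (at u)" for k u
    unfolding D_def by simp
  then obtain u where
    "D 0 t = (\<Sum>k<s. D k 0 / fact k * t ^ k) + D s u / fact s * t ^ s"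
    using Maclaurin_all_le[of D "D 0" t s] by auto
  moreover have "D s u = 0"
    unfolding D_def using higher_pderiv_eq_0[OF assms] by simp
  ultimately show ?thesis
    unfolding D_def by (simp add: mult.commute)
qed

section \<open>Taylor factorisation of the Casoratian\<close>

definition deriv_matrix :: "(nat \<Rightarrow> real poly) \<Rightarrow> nat \<Rightarrow> nat \<Rightarrow> real \<Rightarrow> real mat" where
  "deriv_matrix p r s x = mat s r (\<lambda>(k, j). poly ((pderiv ^^ k) (p j)) x)"

definition taylor_matrix :: "nat \<Rightarrow> nat \<Rightarrow> real mat" where
  "taylor_matrix r s = mat r s (\<lambda>(i, k). real i ^ k / fact k)"

definition taylor_minor :: "nat \<Rightarrow> (nat \<Rightarrow> nat) \<Rightarrow> real" where
  "taylor_minor r f = det (mat r r (\<lambda>(i, j). real i ^ f j / fact (f j)))"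

lemma deriv_matrix_carrier [simp]: "deriv_matrix p r s x \<in> carrier_mat s r"
  unfolding deriv_matrix_def by simp

lemma taylor_matrix_carrier [simp]: "taylor_matrix r s \<in> carrier_mat r s"
  unfolding taylor_matrix_def by simp

lemma wronskian_eq_det_deriv_matrix: "wronskian p m x = det (deriv_matrix p (Suc m) (Suc m) x)"
  unfolding wronskian_def deriv_matrix_def ..

lemma casoratian_eq_det_taylor_deriv:
  assumes "\<forall>j\<le>m. degree (p j) < s"
  shows "casoratian p m x = det (taylor_matrix (Suc m) s * deriv_matrix p (Suc m) s x)"
proof -
  have "poly (p j) (x + real i) = (\<Sum>k\<in>{0..<s}. real i ^ k / fact k * poly ((pderiv ^^ k) (p j)) x)"
    if "j \<le> m" for i j
    using poly_add_Taylor[of "p j" s x "real i"] assms that by (simp add: atLeast0LessThan)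
  then show ?thesis
    unfolding casoratian_def taylor_matrix_def deriv_matrix_def
    by (intro arg_cong[where f = det] eq_matI) (auto simp: scalar_prod_def)
qed

lemma det_taylor_matrix: "det (taylor_matrix (Suc m) (Suc m)) = 1"
proof -
  \<comment> \<open>At 0, the Casoratian and the Wronskian of the falling factorials are triangular with the
    same diagonal entries \<open>j!\<close>.\<close>
  let ?r = "Suc m" and ?F = "deriv_matrix falling_poly (Suc m) (Suc m) 0"
  have diag: "poly ((pderiv ^^ i) (falling_poly i)) (0 :: real) = fact i" for i
    using coeff_higher_pderiv_degree_minus[of i "falling_poly i :: real poly"]
    by (simp add: poly_0_coeff_0 poly_falling_poly_self)
  have "casoratian falling_poly m 0 =
      prod_list (diag_mat (mat ?r ?r (\<lambda>(i, j). poly (falling_poly j) (0 + real i) :: real)))"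
    unfolding casoratian_def by (rule det_lower_triangular[of ?r]) (auto simp: poly_falling_poly_of_nat_less)
  also have "\<dots> = prod_list (diag_mat ?F)"
    unfolding diag_mat_def using diag
    by (intro arg_cong[where f = prod_list] map_cong) (auto simp: deriv_matrix_def poly_falling_poly_self)
  also have "\<dots> = det ?F"
    by (rule det_upper_triangular[symmetric])
      (auto simp: upper_triangular_def deriv_matrix_def higher_pderiv_eq_0)
  finally have "det (taylor_matrix ?r ?r) * det ?F = det ?F"
    using casoratian_eq_det_taylor_deriv[of m falling_poly ?r 0] by (simp add: det_mult[of _ ?r])
  moreover have "det ?F \<noteq> 0"
    using diag by (subst det_upper_triangular)
      (auto simp: upper_triangular_def deriv_matrix_def higher_pderiv_eq_0 diag_mat_def prod_list_zero_iff)
  ultimately show ?thesis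
    by simp
qed

lemma casoratian_eq_wronskian_if_degree_le:
  assumes "\<forall>j\<le>m. degree (p j) \<le> m"
  shows "casoratian p m x = wronskian p m x"
proof -
  have "casoratian p m x = det (taylor_matrix (Suc m) (Suc m) * deriv_matrix p (Suc m) (Suc m) x)"
    using assms by (intro casoratian_eq_det_taylor_deriv) (simp add: less_Suc_eq_le)
  also have "\<dots> = wronskian p m x"
    by (simp add: det_mult[of _ "Suc m"] det_taylor_matrix wronskian_eq_det_deriv_matrix)
  finally show ?thesis .
qed

lemma det_taylor_deriv_sum_bounded_maps:
  "det (taylor_matrix r s * deriv_matrix p r s x) =
    (\<Sum>f\<in>bounded_maps r s. taylor_minor r f * poly (\<Prod>j\<in>{0..<r}. (pderiv ^^ f j) (p j)) x)"
proof -
  have "det (taylor_matrix r s * deriv_matrix p r s x) = (\<Sum>f\<in>bounded_maps r s.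
      (\<Prod>j\<in>{0..<r}. deriv_matrix p r s x $$ (f j, j)) * det (mat r r (\<lambda>(i, j). taylor_matrix r s $$ (i, f j))))"
    by (rule det_mult_sum_bounded_maps) simp_all
  also have "\<dots> = (\<Sum>f\<in>bounded_maps r s. taylor_minor r f * poly (\<Prod>j\<in>{0..<r}. (pderiv ^^ f j) (p j)) x)"
    unfolding taylor_minor_def taylor_matrix_def deriv_matrix_def bounded_maps_def poly_prod
    by (intro sum.cong refl) (auto intro!: prod.cong arg_cong[where f = det] eq_matI)
  finally show ?thesis .
qed

section \<open>The coefficient below the leading term\<close>

lemma sum_nat_set_lower_bound:
  fixes A :: "nat set"
  assumes "finite A" "card A = r"
  shows "\<Sum>{..<r} \<le> \<Sum>A \<and> (\<Sum>A = \<Sum>{..<r} \<longrightarrow> A = {..<r})"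
  using assms
proof (induction r arbitrary: A)
  case (Suc r)
  define a where "a = Max A"
  define A' where "A' = A - {a}"
  have "a \<in> A"
    unfolding a_def using Suc.prems by (intro Max_in) auto
  then have a: "A = insert a A'"
    unfolding A'_def by blast
  have "finite A'" "card A' = r"
    using Suc.prems \<open>a \<in> A\<close> unfolding A'_def by auto
  note IH = Suc.IH[OF this]
  have "card A \<le> card {..a}"
    using Suc.prems unfolding a_def by (intro card_mono) auto
  then have "r \<le> a"
    using Suc.prems by simp
  have "\<Sum>A = a + \<Sum>A'"
    using \<open>a \<in> A\<close> Suc.prems(1) unfolding A'_def by (simp add: sum.remove)
  moreover have "A = {..<Suc r}" if "a = r" "A' = {..<r}"
    using a that by auto
  ultimately show ?case
    using IH \<open>r \<le> a\<close> by auto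
qed simp

lemma sum_nat_set_eq_lower_bound_Suc:
  fixes A :: "nat set"
  assumes A: "finite A" "card A = r" and sum_A: "\<Sum>A = \<Sum>{..<r} + 1"
  shows "A = insert r {..<r - 1}"
proof -
  define a where "a = Max A"
  define A' where "A' = A - {a}"
  have "A \<noteq> {}"
    using sum_A by auto
  then have "a \<in> A" "0 < r"
    unfolding a_def using A by (auto intro: Max_in)
  then have A_eq: "A = insert a A'" and "\<Sum>A = a + \<Sum>A'"
    using A(1) unfolding A'_def by (auto simp: sum.remove)
  have "finite A'" "card A' = r - 1"
    using A \<open>a \<in> A\<close> unfolding A'_def by auto
  note A'_bound = sum_nat_set_lower_bound[OF this]
  have "\<Sum>{..<r} = \<Sum>{..<r - 1} + (r - 1)"
    using \<open>0 < r\<close> by (cases r) auto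
  then have sum_A': "a + \<Sum>A' = \<Sum>{..<r - 1} + r"
    using sum_A \<open>\<Sum>A = a + \<Sum>A'\<close> \<open>0 < r\<close> by simp
  then have "a \<le> r"
    using A'_bound by linarith
  have a_r: "A' = {..<r - 1}" if "a = r"
    using A'_bound sum_A' that by simp
  show ?thesis
  proof (cases "a = r")
    case True
    then show ?thesis
      using A_eq a_r by simp
  next
    case False
    have "A \<subseteq> {..<r}"
    proof
      fix x assume "x \<in> A"
      then have "x \<le> a"
        unfolding a_def using A(1) by simp
      then show "x \<in> {..<r}"
        using \<open>a \<le> r\<close> False by simp
    qed
    then have "A = {..<r}"
      using A by (intro card_subset_eq) auto
    then show ?thesis
      using sum_A by simp
  qed
qed

lemma sum_ne_sum_atMost_if_inj:
  fixes d :: "nat \<Rightarrow> nat"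
  assumes "inj_on d {..m}" "j \<le> m" "m < d j"
  shows "(\<Sum>i\<le>m. d i) \<noteq> (\<Sum>l\<le>m. l)"
proof
  assume "(\<Sum>i\<le>m. d i) = (\<Sum>l\<le>m. l)"
  then have "\<Sum>(d ` {..m}) = \<Sum>{..<Suc m}"
    using assms(1) by (simp add: sum.reindex lessThan_Suc_atMost)
  then have "d ` {..m} = {..<Suc m}"
    using sum_nat_set_lower_bound[of "d ` {..m}" "Suc m"] assms(1) by (simp add: card_image)
  then have "d j < Suc m"
    using assms(2) by blast
  then show False
    using assms(3) by simp
qed

lemma coeff_mult_at_degree_bounds:
  fixes p q :: "'a :: idom poly"
  assumes "degree p \<le> a" "degree q \<le> b"
  shows "coeff (p * q) (a + b) = coeff p a * coeff q b"
proof (cases "degree p = a \<and> degree q = b")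
  case True
  then show ?thesis using coeff_mult_degree_sum[of p q] by simp
next
  case False
  then have "degree (p * q) < a + b"
    using assms degree_mult_le[of p q] by linarith
  moreover have "coeff p a = 0 \<or> coeff q b = 0"
    using False assms by (auto intro: coeff_eq_0)
  ultimately show ?thesis
    by (auto simp: coeff_eq_0)
qed

lemma coeff_prod_at_degree_bounds:
  fixes g :: "'b \<Rightarrow> 'a :: idom poly"
  assumes "finite J" "\<forall>j\<in>J. degree (g j) \<le> k j"
  shows "coeff (\<Prod>j\<in>J. g j) (\<Sum>j\<in>J. k j) = (\<Prod>j\<in>J. coeff (g j) (k j))"
  using assms
proof (induction J rule: finite_induct)
  case (insert a J)
  have "degree (\<Prod>j\<in>J. g j) \<le> (\<Sum>j\<in>J. k j)"
    using insert.prems degree_prod_sum_le[OF insert.hyps(1), of g] sum_mono[of J "\<lambda>j. degree (g j)" k]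
    by (simp add: o_def)
  then show ?case
    using insert by (simp add: coeff_mult_at_degree_bounds)
qed simp

lemma coeff_prod_higher_pderiv:
  fixes q :: "'b \<Rightarrow> 'a :: {idom, semiring_char_0} poly"
  assumes "finite J"
  shows "coeff (\<Prod>j\<in>J. (pderiv ^^ f j) (q j)) (\<Sum>j\<in>J. degree (q j) - f j) =
    (\<Prod>j\<in>J. poly (falling_poly (f j)) (of_nat (degree (q j))) * lead_coeff (q j))"
  using assms by (simp add: coeff_prod_at_degree_bounds degree_higher_pderiv coeff_higher_pderiv_degree_minus)

definition gap_index :: "nat \<Rightarrow> nat \<Rightarrow> nat" where
  "gap_index m l = (if l < m then l else Suc m)"

lemma inj_on_gap_index: "inj_on (gap_index m) {0..<Suc m}"
  unfolding gap_index_def inj_on_def by auto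

lemma image_gap_index: "gap_index m ` {0..<Suc m} = insert (Suc m) {..<m}"
  unfolding gap_index_def by (auto simp: image_def less_Suc_eq)

lemma det_taylor_gap_minor_nonzero:
  assumes "1 \<le> m"
  shows "det (mat (Suc m) (Suc m) (\<lambda>(i, l). real i ^ gap_index m l / fact (gap_index m l))) \<noteq> 0"
proof -
  define \<phi> :: "nat \<Rightarrow> real poly" where "\<phi> l = monom (1 / fact (gap_index m l)) (gap_index m l)" for l
  have "det (mat (Suc m) (Suc m) (\<lambda>(j, l). poly (\<phi> l) (real j))) \<noteq> 0"
  proof (rule det_poly_eval_gap_basis_nonzero)
    show "inj_on real {..m}"
      by (simp add: inj_on_def)
    show "\<forall>l<m. \<phi> l \<noteq> 0 \<and> degree (\<phi> l) = l" and "degree (\<phi> m) = Suc m"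
      by (simp_all add: \<phi>_def gap_index_def degree_monom_eq)
    have "0 < (\<Sum>j\<le>m. real j)"
      using assms by (intro sum_pos2[of _ 1]) auto
    then show "coeff (\<phi> m) m \<noteq> - lead_coeff (\<phi> m) * (\<Sum>j\<le>m. real j)"
      by (simp add: \<phi>_def gap_index_def degree_monom_eq)
  qed
  moreover have "mat (Suc m) (Suc m) (\<lambda>(j, l). poly (\<phi> l) (real j)) =
      mat (Suc m) (Suc m) (\<lambda>(i, l). real i ^ gap_index m l / fact (gap_index m l))"
    by (auto simp: \<phi>_def poly_monom intro!: eq_matI)
  ultimately show ?thesis
    by simp
qed

lemma det_falling_gap_minor_nonzero:
  assumes "inj_on d {..m}" "(\<Sum>j\<le>m. d j) \<noteq> (\<Sum>l\<le>m. l)"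
  shows "det (mat (Suc m) (Suc m) (\<lambda>(l, j). poly (falling_poly (gap_index m l)) (real (d j)))) \<noteq> 0"
proof -
  have "(\<Sum>j\<le>m. real (d j)) \<noteq> (\<Sum>l\<le>m. real l)"
    using assms(2) unfolding of_nat_sum[symmetric] of_nat_eq_iff .
  then have "det (mat (Suc m) (Suc m) (\<lambda>(j, l). poly (falling_poly (gap_index m l)) (real (d j)))) \<noteq> 0"
    using assms(1)
    by (intro det_poly_eval_gap_basis_nonzero) (auto simp: gap_index_def coeff_falling_poly_Suc inj_on_def)
  moreover have "mat (Suc m) (Suc m) (\<lambda>(l, j). poly (falling_poly (gap_index m l)) (real (d j))) =
      transpose_mat (mat (Suc m) (Suc m) (\<lambda>(j, l). poly (falling_poly (gap_index m l)) (real (d j))))"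
    by (intro eq_matI) auto
  ultimately show ?thesis
    by (simp add: det_transpose[of _ "Suc m"])
qed

lemma sum_bounded_map_ge:
  assumes f: "f \<in> bounded_maps r s - bounded_maps r r" and inj: "inj_on f {0..<r}"
  shows "\<Sum>{..<r} + 1 \<le> (\<Sum>j\<in>{0..<r}. f j)"
    and "(\<Sum>j\<in>{0..<r}. f j) = \<Sum>{..<r} + 1 \<longleftrightarrow> f ` {0..<r} = insert r {..<r - 1}"
proof -
  have sum_f: "(\<Sum>j\<in>{0..<r}. f j) = \<Sum>(f ` {0..<r})"
    using inj by (simp add: sum.reindex)
  obtain i where i: "i < r" "r \<le> f i"
    using f unfolding bounded_maps_def by auto
  then have "f ` {0..<r} \<noteq> {..<r}"
    by (metis atLeastLessThan_iff imageI lessThan_iff not_le zero_le)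
  moreover note bound = sum_nat_set_lower_bound[of "f ` {0..<r}" r]
  ultimately show "\<Sum>{..<r} + 1 \<le> (\<Sum>j\<in>{0..<r}. f j)"
    using inj sum_f by (fastforce simp: card_image)
  have "\<Sum>(insert r {..<r - 1}) = \<Sum>{..<r} + 1"
    using i by (cases r) auto
  then show "(\<Sum>j\<in>{0..<r}. f j) = \<Sum>{..<r} + 1 \<longleftrightarrow> f ` {0..<r} = insert r {..<r - 1}"
    using sum_nat_set_eq_lower_bound_Suc[of "f ` {0..<r}" r] inj sum_f by (auto simp: card_image)
qed

lemma taylor_minor_mult_coeff_deriv_prod:
  fixes q :: "nat \<Rightarrow> real poly"
  assumes f: "f \<in> bounded_maps r s - bounded_maps r r"
  defines "S \<equiv> \<Sum>j\<in>{0..<r}. degree (q j)"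
  shows "taylor_minor r f * coeff (\<Prod>j\<in>{0..<r}. (pderiv ^^ f j) (q j)) (S - (\<Sum>{..<r} + 1)) =
    (if inj_on f {0..<r} \<and> f ` {0..<r} = insert r {..<r - 1}
     then taylor_minor r f * (\<Prod>j\<in>{0..<r}. poly (falling_poly (f j)) (real (degree (q j))) * lead_coeff (q j))
     else 0)"
proof (cases "inj_on f {0..<r}")
  case False
  then show ?thesis
    using det_non_inj_columns[of f r "\<lambda>i k. real i ^ k / fact k"] unfolding taylor_minor_def by simp
next
  case inj: True
  let ?P = "\<Prod>j\<in>{0..<r}. (pderiv ^^ f j) (q j)"
  let ?F = "\<Sum>j\<in>{0..<r}. f j"
  note bounds = sum_bounded_map_ge[OF f inj]
  show ?thesis
  proof (cases "\<exists>j<r. degree (q j) < f j")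
    case True
    then obtain j where j: "j < r" "degree (q j) < f j"
      by auto
    then have P0: "?P = 0"
      by (intro prod_zero bexI[of _ j]) (auto simp: higher_pderiv_eq_0)
    have B0: "(\<Prod>j\<in>{0..<r}. poly (falling_poly (f j)) (real (degree (q j))) * lead_coeff (q j)) = 0"
      using j by (intro prod_zero bexI[of _ j]) (auto simp: poly_falling_poly_of_nat_less)
    show ?thesis
      unfolding P0 B0 by simp
  next
    case False
    then have le: "f j \<le> degree (q j)" if "j \<in> {0..<r}" for j
      using that by (meson atLeastLessThan_iff not_le)
    then have "?F \<le> S"
      unfolding S_def by (rule sum_mono)
    have diff: "(\<Sum>j\<in>{0..<r}. degree (q j) - f j) = S - ?F"
      using le unfolding S_def by (intro sum_subtractf_nat) auto
    show ?thesis
    proof (cases "f ` {0..<r} = insert r {..<r - 1}")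
      case True
      then show ?thesis
        using bounds(2) inj diff coeff_prod_higher_pderiv[of "{0..<r}" f q] by simp
    next
      case False
      have "degree ?P \<le> (\<Sum>j\<in>{0..<r}. degree (q j) - f j)"
        using degree_prod_sum_le[of "{0..<r}" "\<lambda>j. (pderiv ^^ f j) (q j)"]
        by (simp add: o_def degree_higher_pderiv)
      also have "\<dots> < S - (\<Sum>{..<r} + 1)"
        using bounds False \<open>?F \<le> S\<close> unfolding diff by (simp add: diff_less_mono2)
      finally show ?thesis
        using False by (simp add: coeff_eq_0)
    qed
  qed
qed

lemma casoratian_sum_bounded_maps:
  assumes "\<forall>j\<le>m. degree (p j) < s"
  shows "casoratian p m x = (\<Sum>f\<in>bounded_maps (Suc m) s.
    taylor_minor (Suc m) f * poly (\<Prod>j\<in>{0..<Suc m}. (pderiv ^^ f j) (p j)) x)"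
  using assms by (simp add: casoratian_eq_det_taylor_deriv det_taylor_deriv_sum_bounded_maps)

lemma wronskian_sum_bounded_maps:
  "wronskian p m x = (\<Sum>f\<in>bounded_maps (Suc m) (Suc m).
    taylor_minor (Suc m) f * poly (\<Prod>j\<in>{0..<Suc m}. (pderiv ^^ f j) (p j)) x)"
proof -
  have "wronskian p m x = det (taylor_matrix (Suc m) (Suc m) * deriv_matrix p (Suc m) (Suc m) x)"
    by (simp add: wronskian_eq_det_deriv_matrix det_mult[of _ "Suc m"] det_taylor_matrix)
  then show ?thesis
    by (simp only: det_taylor_deriv_sum_bounded_maps)
qed

lemma sum_gap_maps_taylor_minor:
  fixes d :: "nat \<Rightarrow> nat"
  assumes "m < n"
  shows "(\<Sum>f\<in>{f\<in>bounded_maps (Suc m) (Suc n). inj_on f {0..<Suc m} \<and> f ` {0..<Suc m} = gap_index m ` {0..<Suc m}}.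
      taylor_minor (Suc m) f * (\<Prod>j\<in>{0..<Suc m}. poly (falling_poly (f j)) (real (d j)))) =
    det (mat (Suc m) (Suc m) (\<lambda>(i, l). real i ^ gap_index m l / fact (gap_index m l))) *
    det (mat (Suc m) (Suc m) (\<lambda>(l, j). poly (falling_poly (gap_index m l)) (real (d j))))"
proof -
  let ?r = "Suc m" and ?s = "Suc n"
  let ?E = "{f\<in>bounded_maps ?r ?s. inj_on f {0..<?r} \<and> f ` {0..<?r} = gap_index m ` {0..<?r}}"
  let ?B = "mat ?s ?r (\<lambda>(k, j). poly (falling_poly k) (real (d j)))"
  have "(\<Sum>f\<in>?E. taylor_minor ?r f * (\<Prod>j\<in>{0..<?r}. poly (falling_poly (f j)) (real (d j)))) =
      (\<Sum>f\<in>?E. (\<Prod>j\<in>{0..<?r}. ?B $$ (f j, j)) *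
        det (mat ?r ?r (\<lambda>(i, j). taylor_matrix ?r ?s $$ (i, f j))))"
  proof (rule sum.cong[OF refl])
    fix f assume "f \<in> ?E"
    then have f: "f j < ?s" if "j < ?r" for j
      using that unfolding bounded_maps_def by auto
    then have "(\<Prod>j\<in>{0..<?r}. ?B $$ (f j, j)) = (\<Prod>j\<in>{0..<?r}. poly (falling_poly (f j)) (real (d j)))"
      by (intro prod.cong) auto
    moreover have "mat ?r ?r (\<lambda>(i, j). taylor_matrix ?r ?s $$ (i, f j)) =
        mat ?r ?r (\<lambda>(i, j). real i ^ f j / fact (f j))"
      using f by (intro eq_matI) (auto simp: taylor_matrix_def)
    ultimately show "taylor_minor ?r f * (\<Prod>j\<in>{0..<?r}. poly (falling_poly (f j)) (real (d j))) =
        (\<Prod>j\<in>{0..<?r}. ?B $$ (f j, j)) * det (mat ?r ?r (\<lambda>(i, j). taylor_matrix ?r ?s $$ (i, f j)))"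
      by (simp add: taylor_minor_def)
  qed
  also have "\<dots> = det (mat ?r ?r (\<lambda>(i, l). taylor_matrix ?r ?s $$ (i, gap_index m l)) *
        mat ?r ?r (\<lambda>(l, j). ?B $$ (gap_index m l, j)))"
    using assms inj_on_gap_index[of m] image_gap_index[of m]
    by (intro det_mult_selected_sum_bounded_maps[symmetric]) auto
  also have "\<dots> = det (mat ?r ?r (\<lambda>(i, l). real i ^ gap_index m l / fact (gap_index m l))) *
      det (mat ?r ?r (\<lambda>(l, j). poly (falling_poly (gap_index m l)) (real (d j))))"
  proof -
    have "gap_index m l < ?s" for l
      using assms by (simp add: gap_index_def)
    then have "mat ?r ?r (\<lambda>(i, l). taylor_matrix ?r ?s $$ (i, gap_index m l)) =
        mat ?r ?r (\<lambda>(i, l). real i ^ gap_index m l / fact (gap_index m l))"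
      and "mat ?r ?r (\<lambda>(l, j). ?B $$ (gap_index m l, j)) =
        mat ?r ?r (\<lambda>(l, j). poly (falling_poly (gap_index m l)) (real (d j)))"
      by (auto simp: taylor_matrix_def intro!: eq_matI)
    then show ?thesis
      by (simp add: det_mult[of _ ?r])
  qed
  finally show ?thesis .
qed

lemma sum_taylor_minor_coeff_deriv_prod:
  fixes q :: "nat \<Rightarrow> real poly"
  assumes mn: "m < n"
  defines "S \<equiv> \<Sum>j\<in>{0..<Suc m}. degree (q j)"
  shows "(\<Sum>f\<in>bounded_maps (Suc m) (Suc n) - bounded_maps (Suc m) (Suc m).
      taylor_minor (Suc m) f * coeff (\<Prod>j\<in>{0..<Suc m}. (pderiv ^^ f j) (q j)) (S - (\<Sum>{..<Suc m} + 1))) =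
    (\<Prod>j\<in>{0..<Suc m}. lead_coeff (q j)) *
    det (mat (Suc m) (Suc m) (\<lambda>(i, l). real i ^ gap_index m l / fact (gap_index m l))) *
    det (mat (Suc m) (Suc m) (\<lambda>(l, j). poly (falling_poly (gap_index m l)) (real (degree (q j)))))"
proof -
  let ?r = "Suc m" and ?s = "Suc n"
  let ?D = "bounded_maps ?r ?s - bounded_maps ?r ?r"
  let ?E = "{f\<in>bounded_maps ?r ?s. inj_on f {0..<?r} \<and> f ` {0..<?r} = gap_index m ` {0..<?r}}"
  let ?falling = "\<lambda>f. \<Prod>j\<in>{0..<?r}. poly (falling_poly (f j)) (real (degree (q j)))"
  have "f \<notin> bounded_maps ?r ?r" if "f ` {0..<?r} = insert ?r {..<m}" for f
  proof
    have "?r \<in> f ` {0..<?r}"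
      using that by simp
    then obtain i where "i < ?r" "f i = ?r"
      by auto
    moreover assume "f \<in> bounded_maps ?r ?r"
    ultimately show False
      unfolding bounded_maps_def by auto
  qed
  then have E: "?E = {f\<in>?D. inj_on f {0..<?r} \<and> f ` {0..<?r} = insert ?r {..<?r - 1}}"
    unfolding image_gap_index by auto
  have "(\<Sum>f\<in>?D. taylor_minor ?r f * coeff (\<Prod>j\<in>{0..<?r}. (pderiv ^^ f j) (q j)) (S - (\<Sum>{..<?r} + 1))) =
      (\<Sum>f\<in>?D. if inj_on f {0..<?r} \<and> f ` {0..<?r} = insert ?r {..<?r - 1}
        then taylor_minor ?r f * (\<Prod>j\<in>{0..<?r}. poly (falling_poly (f j)) (real (degree (q j))) * lead_coeff (q j))
        else 0)"
    unfolding S_def by (intro sum.cong refl taylor_minor_mult_coeff_deriv_prod)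
  also have "\<dots> = (\<Sum>f\<in>?E. taylor_minor ?r f *
      (\<Prod>j\<in>{0..<?r}. poly (falling_poly (f j)) (real (degree (q j))) * lead_coeff (q j)))"
    unfolding E by (rule sum.inter_filter[symmetric]) (simp add: finite_bounded_maps)
  also have "\<dots> = (\<Prod>j\<in>{0..<?r}. lead_coeff (q j)) * (\<Sum>f\<in>?E. taylor_minor ?r f * ?falling f)"
    by (simp add: sum_distrib_left prod.distrib mult_ac)
  finally show ?thesis
    using sum_gap_maps_taylor_minor[OF mn, of "\<lambda>j. degree (q j)"] by (simp add: mult.assoc)
qed

lemma wronskian_ne_casoratian_if_distinct_degrees:
  fixes q :: "nat \<Rightarrow> real poly"
  assumes m: "1 \<le> m" "m < n"
    and nonzero: "\<forall>j\<le>m. q j \<noteq> 0" and distinct: "inj_on (\<lambda>j. degree (q j)) {..m}"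
    and degree: "\<forall>j\<le>m. degree (q j) \<le> n" "\<exists>j\<le>m. degree (q j) = n"
  shows "\<exists>x. wronskian q m x \<noteq> casoratian q m x"
proof -
  let ?r = "Suc m" and ?s = "Suc n"
  define T where "T = (\<Sum>f\<in>bounded_maps ?r ?s - bounded_maps ?r ?r.
    smult (taylor_minor ?r f) (\<Prod>j\<in>{0..<?r}. (pderiv ^^ f j) (q j)))"
  have poly_T: "poly T x = casoratian q m x - wronskian q m x" for x
  proof -
    let ?g = "\<lambda>f. taylor_minor ?r f * poly (\<Prod>j\<in>{0..<?r}. (pderiv ^^ f j) (q j)) x"
    have "bounded_maps ?r ?r \<subseteq> bounded_maps ?r ?s"
      using m by (intro bounded_maps_mono) simp
    then have "sum ?g (bounded_maps ?r ?s) = sum ?g (bounded_maps ?r ?s - bounded_maps ?r ?r) + sum ?g (bounded_maps ?r ?r)"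
      by (rule sum.subset_diff[OF _ finite_bounded_maps])
    moreover have "casoratian q m x = sum ?g (bounded_maps ?r ?s)"
      using degree(1) by (intro casoratian_sum_bounded_maps) (simp add: le_imp_less_Suc)
    ultimately show ?thesis
      unfolding T_def wronskian_sum_bounded_maps poly_sum by simp
  qed
  obtain j where "j \<le> m" "degree (q j) = n"
    using degree(2) by blast
  then have "(\<Sum>j\<le>m. degree (q j)) \<noteq> (\<Sum>l\<le>m. l)"
    using distinct m(2) by (intro sum_ne_sum_atMost_if_inj) auto
  then have "coeff T ((\<Sum>j\<in>{0..<?r}. degree (q j)) - (\<Sum>{..<?r} + 1)) \<noteq> 0"
    unfolding T_def coeff_sum coeff_smult sum_taylor_minor_coeff_deriv_prod[OF m(2)]
    using nonzero det_taylor_gap_minor_nonzero[OF m(1)] det_falling_gap_minor_nonzero[OF distinct]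
    by simp
  then obtain x where "poly T x \<noteq> 0"
    using poly_all_0_iff_0[of T] by auto
  then have "wronskian q m x \<noteq> casoratian q m x"
    using poly_T[of x] by simp
  then show ?thesis ..
qed

lemma wronskian_ne_casoratian:
  fixes p :: "nat \<Rightarrow> real poly"
  assumes m: "1 \<le> m" "m < n" and indep: "\<not> poly_lin_dep p m"
    and degree: "\<forall>i\<le>m. degree (p i) \<le> n" "\<exists>i\<le>m. degree (p i) = n"
  shows "\<exists>x. wronskian p m x \<noteq> casoratian p m x"
proof -
  have "poly_lin_indep p {..m}"
    using indep poly_lin_indep_atMost_iff by blast
  then obtain q where q: "\<forall>j\<in>{..m}. poly_in_span p {..m} (q j) \<and> q j \<noteq> 0"
      "inj_on (\<lambda>j. degree (q j)) {..m}" "\<forall>i\<in>{..m}. \<exists>j\<in>{..m}. degree (p i) \<le> degree (q j)"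
    using exists_span_distinct_degrees[of "{..m}" p] by blast
  obtain C where C: "\<forall>j\<le>m. q j = (\<Sum>k\<le>m. smult (C j k) (p k))"
    using bchoice[of "{..m}" "\<lambda>j c. q j = (\<Sum>k\<le>m. smult (c k) (p k))"] q(1)
    unfolding poly_in_span_def by auto
  have q_le: "\<forall>j\<le>m. degree (q j) \<le> n"
    using degree(1) q(1) degree_le_if_poly_in_span[of "{..m}" p n] by auto
  moreover have "\<exists>j\<le>m. degree (q j) = n"
  proof -
    obtain i where "i \<le> m" "degree (p i) = n"
      using degree(2) by blast
    then obtain j where "j \<le> m" "n \<le> degree (q j)"
      using q(3) by auto
    then show ?thesis
      using q_le by (auto intro: le_antisym)
  qed
  ultimately obtain x where "wronskian q m x \<noteq> casoratian q m x"
    using wronskian_ne_casoratian_if_distinct_degrees[OF m] q by blast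
  then show ?thesis
    using wronskian_change_basis[OF C] casoratian_change_basis[OF C] by auto
qed

theorem mainTheorem4:
  fixes p :: "nat \<Rightarrow> real poly" and m n :: nat
  assumes distinct: "inj_on p {..m}"
    and n_def: "n = (LEAST k. \<forall>i\<le>m. p i \<in> polys_upto k)"
  shows
    "(m \<le> n \<and> poly_span p m = polys_upto m \<longrightarrow>
        (\<forall>x. wronskian p m x = casoratian p m x))
   \<and> (m \<le> n \<and> poly_lin_dep p m \<longrightarrow>
        (\<forall>x. wronskian p m x = 0 \<and> casoratian p m x = 0))
   \<and> (m < n \<and> 1 \<le> m \<and> \<not> poly_lin_dep p m \<and>
        (\<forall>k\<in>{1..m}. poly_span p m \<noteq> polys_upto k) \<longrightarrow>
        (\<exists>x. wronskian p m x \<noteq> casoratian p m x))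
   \<and> (n < m \<longrightarrow>
        poly_lin_dep p m \<and> (\<forall>x. wronskian p m x = 0 \<and> casoratian p m x = 0))"
proof -
  note degree = LEAST_polys_upto_max_degree[OF n_def]
  show ?thesis
  proof (intro conjI impI allI)
    fix x
    assume "m \<le> n \<and> poly_span p m = polys_upto m"
    then have "\<forall>i\<le>m. degree (p i) \<le> m"
      using degree_le_if_span_eq_polys_upto by blast
    then show "wronskian p m x = casoratian p m x"
      by (simp add: casoratian_eq_wronskian_if_degree_le)
  next
    fix x
    assume "m \<le> n \<and> poly_lin_dep p m"
    then show "wronskian p m x = 0" "casoratian p m x = 0"
      by (simp_all add: wronskian_lin_dep casoratian_lin_dep)
  next
    assume "m < n \<and> 1 \<le> m \<and> \<not> poly_lin_dep p m \<and> (\<forall>k\<in>{1..m}. poly_span p m \<noteq> polys_upto k)"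
    then show "\<exists>x. wronskian p m x \<noteq> casoratian p m x"
      using wronskian_ne_casoratian degree by blast
  next
    assume "n < m"
    then show dep: "poly_lin_dep p m"
      using poly_lin_dep_if_degree_less degree(1) by blast
    fix x
    show "wronskian p m x = 0" "casoratian p m x = 0"
      using dep by (simp_all add: wronskian_lin_dep casoratian_lin_dep)
  qed
qed

end
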